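(* Let $(z,x^1,\dots,x^{2k})$ be coordinates on a neighborhood of the origin in $\mathbf{C}^{2k+1}$ ($k\ge1$), and let $\omega=dz+\alpha+z\beta$ be a germ at the origin of a singular contact form of the first type whose Martinet hypersurface is $S=\{z=0\}$ and is structurally smooth, where $\alpha=\sum_{i=1}^{2k}a_i(x)\,dx^i$ (coefficients independent of $z$) and $\beta=\sum_{i=1}^{2k}b_i(z,x)\,dx^i$. Put $Z=\partial/\partial z$ and write a germ of holomorphic vector field $X$ at the origin as $$X=fZ+\sum_{i=1}^{2k}s_i\Big(\frac{\partial}{\partial x^i}-(a_i+zb_i)Z\Big)$$ with holomorphic germs $f,s_1,\dots,s_{2k}$ (so $f=\omega(X)$). Then $X$ is an infinitesimal contact transformation of $\omega$ (i.e. $\mathcal{L}_X\omega=h\omega$ for some holomorphic germ $h$) if and only if $$\imath_Z\imath_X(\omega\wedge d\omega)=\imath_Z\big(f\,d\omega+\omega\wedge df\big).$$ Furthermore, in this case $$\mathcal{L}_X\omega=\Big(\frac{\partial f}{\partial z}-\sum_{m=1}^{2k}s_mb_m-z\sum_{m=1}^{2k}s_m\frac{\partial b_m}{\partial z}\Big)\omega.$$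
   Context: Here "singular contact form of the first type with structurally smooth Martinet hypersurface $S=\{z=0\}$" means: $\omega$ is a nowhere vanishing holomorphic $1$-form with $\omega\wedge(d\omega)^k=H\,dz\wedge dx^1\wedge\cdots\wedge dx^{2k}$, where the zero set of $H$ (the Martinet hypersurface) is $\{z=0\}$ and $dH\neq0$ at its points. $\imath$ denotes interior product and $\mathcal{L}$ the Lie derivative. *)

theory Defs
  imports "HOL-Analysis.Analysis"
begin

text \<open>Points of C^(2k+1): pairs (z, x) with x indexed by a finite type 'm of cardinality 2k.
  Differential forms (of any degree p) are represented pointwise as functions of the point and
  of a list of p tangent vectors (determinant convention for wedge and d).\<close>

type_synonym 'm pt = "complex \<times> (complex ^ 'm)"
type_synonym 'm form = "'m::finite pt \<Rightarrow> 'm pt list \<Rightarrow> complex"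

definition cscale :: "complex \<Rightarrow> 'm::finite pt \<Rightarrow> 'm pt" where
  "cscale c v = (c * fst v, \<chi> i. c * (snd v $ i))"

definition holo_germ :: "('m::finite pt \<Rightarrow> complex) \<Rightarrow> bool" where
  "holo_germ g \<longleftrightarrow> (\<exists>U. open U \<and> 0 \<in> U \<and>
     (\<forall>p\<in>U. \<exists>D. (g has_derivative D) (at p) \<and> (\<forall>c v. D (cscale c v) = c * D v)))"

definition dirderiv :: "('m::finite pt \<Rightarrow> complex) \<Rightarrow> 'm pt \<Rightarrow> 'm pt \<Rightarrow> complex" where
  "dirderiv g p v = deriv (\<lambda>t. g (p + cscale t v)) 0"

text \<open>Exterior derivative (evaluated on constant vector fields).\<close>
definition ext_d :: "'m::finite form \<Rightarrow> 'm form" where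
  "ext_d \<alpha> p vs = (\<Sum>i<length vs. (-1) ^ i * dirderiv (\<lambda>q. \<alpha> q (nths vs (- {i}))) p (vs ! i))"

definition wedge :: "nat \<Rightarrow> 'm::finite form \<Rightarrow> 'm form \<Rightarrow> 'm form" where
  "wedge r \<alpha> \<beta> p vs = (\<Sum>I\<in>{I. I \<subseteq> {..<length vs} \<and> card I = r}.
      (-1) ^ (\<Sum>I - r * (r - 1) div 2) * \<alpha> p (nths vs I) * \<beta> p (nths vs (- I)))"

primrec wpow2 :: "'m::finite form \<Rightarrow> nat \<Rightarrow> 'm form" where
  "wpow2 \<eta> 0 = (\<lambda>p vs. 1)"
| "wpow2 \<eta> (Suc j) = wedge 2 \<eta> (wpow2 \<eta> j)"

definition iprod :: "('m::finite pt \<Rightarrow> 'm pt) \<Rightarrow> 'm form \<Rightarrow> 'm form" where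
  "iprod X \<alpha> p vs = \<alpha> p (X p # vs)"

definition fscale :: "('m::finite pt \<Rightarrow> complex) \<Rightarrow> 'm form \<Rightarrow> 'm form" where
  "fscale g \<alpha> p vs = g p * \<alpha> p vs"

definition fadd :: "'m::finite form \<Rightarrow> 'm form \<Rightarrow> 'm form" where
  "fadd \<alpha> \<beta> p vs = \<alpha> p vs + \<beta> p vs"

definition zero_form_of :: "('m::finite pt \<Rightarrow> complex) \<Rightarrow> 'm form" where
  "zero_form_of g p vs = g p"

definition vfderiv :: "('m::finite pt \<Rightarrow> 'm pt) \<Rightarrow> 'm pt \<Rightarrow> 'm pt \<Rightarrow> 'm pt" where
  "vfderiv X p v = (dirderiv (\<lambda>q. fst (X q)) p v, \<chi> i. dirderiv (\<lambda>q. snd (X q) $ i) p v)"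

text \<open>Lie derivative of a 1-form:  (L_X w)(Y) = X(w(Y)) - w([X,Y]), Y constant, so [X,Y] = - D_Y X.\<close>
definition lie1 :: "('m::finite pt \<Rightarrow> 'm pt) \<Rightarrow> 'm form \<Rightarrow> 'm form" where
  "lie1 X \<omega> p vs = dirderiv (\<lambda>q. \<omega> q vs) p (X p) + \<omega> p [vfderiv X p (hd vs)]"

definition germ_eq :: "nat \<Rightarrow> 'm::finite form \<Rightarrow> 'm form \<Rightarrow> bool" where
  "germ_eq n \<alpha> \<beta> \<longleftrightarrow> (\<exists>U. open U \<and> (0::'m pt) \<in> U \<and>
     (\<forall>p\<in>U. \<forall>vs. length vs = n \<longrightarrow> \<alpha> p vs = \<beta> p vs))"

definition ez :: "'m::finite pt" where "ez = (1, 0)"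
definition ex :: "'m::finite \<Rightarrow> 'm pt" where "ex i = (0, axis i 1)"
definition frame :: "'m::{finite,linorder} pt list" where
  "frame = ez # map ex (sorted_list_of_set UNIV)"

text \<open>Martinet function H: w /\ (dw)^k = H dz /\ dx^1 /\ ... /\ dx^2k.\<close>
definition martinet_fn :: "nat \<Rightarrow> 'm::{finite,linorder} form \<Rightarrow> 'm pt \<Rightarrow> complex" where
  "martinet_fn k \<omega> p = wedge 1 \<omega> (wpow2 (ext_d \<omega>) k) p frame"

definition sing_contact_first_type_S :: "nat \<Rightarrow> 'm::{finite,linorder} form \<Rightarrow> bool" where
  "sing_contact_first_type_S k \<omega> \<longleftrightarrow> (\<exists>U. open U \<and> 0 \<in> U \<and>
     (\<forall>p\<in>U. \<exists>v. \<omega> p [v] \<noteq> 0) \<and>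
     (\<forall>p\<in>U. martinet_fn k \<omega> p = 0 \<longleftrightarrow> fst p = 0) \<and>
     (\<forall>p\<in>U. fst p = 0 \<longrightarrow> (\<exists>v. dirderiv (martinet_fn k \<omega>) p v \<noteq> 0)))"

end

theory Submission
  imports Defs "HOL-Complex_Analysis.Complex_Analysis"
begin

text \<open>
  By Cartan's formula \<open>L\<^sub>X\<omega> = df + \<iota>\<^sub>X d\<omega>\<close> (where \<open>f = \<omega>(X)\<close>), the identity
  \<open>\<iota>\<^sub>Z\<iota>\<^sub>X(\<omega>\<and>d\<omega>) = \<iota>\<^sub>Z(f d\<omega> + \<omega>\<and>df)\<close>, evaluated on a vector \<open>v\<close>, is equivalent to
  \<open>\<omega>(Z) L\<^sub>X\<omega>(v) = \<omega>(v) L\<^sub>X\<omega>(Z)\<close>. As \<open>\<omega>(Z) = 1\<close>, this says that \<open>L\<^sub>X\<omega> = L\<^sub>X\<omega>(Z) \<omega>\<close>, and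
  any multiplier \<open>h\<close> with \<open>L\<^sub>X\<omega> = h \<omega>\<close> must be \<open>L\<^sub>X\<omega>(Z)\<close>, which a direct computation
  identifies with \<open>\<partial>f/\<partial>z - \<Sigma> s\<^sub>m b\<^sub>m - z \<Sigma> s\<^sub>m \<partial>b\<^sub>m/\<partial>z\<close>.

  The analytic input is that this multiplier is holomorphic, i.e. that a partial derivative
  \<open>\<partial>\<^sub>w g\<close> of a holomorphic germ is holomorphic. On each complex line \<open>g\<close> is a holomorphic
  function of one variable, so Cauchy estimates on a ball where \<open>g\<close> is bounded control the
  difference quotients of \<open>g\<close> and of \<open>\<partial>\<^sub>u g\<close> uniformly. Hence the difference quotients of \<open>g\<close>
  in direction \<open>w\<close> have Frechet derivatives converging uniformly, and their limit \<open>\<partial>\<^sub>w g\<close> is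
  differentiable with the complex-linear derivative \<open>u \<mapsto> \<partial>\<^sub>w\<partial>\<^sub>u g\<close>.
\<close>

section \<open>Complex scalar multiplication\<close>

lemma norm_cscale: "norm (cscale c v) = cmod c * norm v"
proof -
  have "norm (\<chi> i. c * snd v $ i) = cmod c * norm (snd v)"
    by (simp add: norm_vec_def norm_mult L2_set_right_distrib)
  then have "norm (cscale c v) = sqrt ((cmod c)\<^sup>2 * ((cmod (fst v))\<^sup>2 + (norm (snd v))\<^sup>2))"
    by (simp add: cscale_def norm_Pair norm_mult power_mult_distrib distrib_left)
  then show ?thesis
    by (cases v) (simp add: real_sqrt_mult norm_Pair)
qed

lemma cscale_add: "cscale (s + t) w = cscale s w + cscale t w"
  by (simp add: cscale_def vec_eq_iff distrib_right)

lemma cscale_scaleR: "cscale (scaleR r t) w = scaleR r (cscale t w)"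
  by (simp add: cscale_def vec_eq_iff vector_scaleR_component)

lemma cscale_0 [simp]: "cscale 0 w = 0"
  by (simp add: cscale_def vec_eq_iff zero_prod_def)

lemma cscale_1 [simp]: "cscale 1 w = w"
  by (simp add: cscale_def vec_eq_iff)

lemma cscale_cscale [simp]: "cscale c (cscale d w) = cscale (c * d) w"
  by (simp add: cscale_def vec_eq_iff)

lemma bounded_linear_cscale: "bounded_linear (\<lambda>t. cscale t w)"
  by (rule bounded_linear_intro[where K="norm w"]) (auto simp: cscale_add cscale_scaleR norm_cscale)

lemma cscale_normalize: "\<exists>u. norm u \<le> 1 \<and> v = cscale (of_real (norm v)) u"
proof (cases "v = 0")
  case False
  then show ?thesis
    by (intro exI[of _ "cscale (of_real (1 / norm v)) v"]) (simp add: norm_cscale norm_divide flip: of_real_mult)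
qed (intro exI[of _ 0], simp)

lemma fst_ez [simp]: "fst ez = 1" and snd_ez [simp]: "snd ez = 0"
  by (simp_all add: ez_def)

lemma snd_cscale_ez [simp]: "snd (cscale t ez) = 0"
  by (simp add: cscale_def ez_def vec_eq_iff)

lemma norm_add_cscale_less:
  assumes "norm q < r" "norm u \<le> 1" "cmod t < r'"
  shows "norm (q + cscale t u) < r + r'"
proof -
  have "norm (q + cscale t u) \<le> norm q + cmod t * norm u"
    using norm_triangle_ineq[of q "cscale t u"] by (simp add: norm_cscale)
  also have "\<dots> \<le> norm q + cmod t"
    using assms(2) by (simp add: mult_left_le)
  finally show ?thesis
    using assms by linarith
qed

section \<open>Complex differentiability\<close>

definition has_cderivative :: "('m::finite pt \<Rightarrow> complex) \<Rightarrow> ('m pt \<Rightarrow> complex) \<Rightarrow> 'm pt \<Rightarrow> bool" where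
  "has_cderivative g D p \<longleftrightarrow> (g has_derivative D) (at p) \<and> (\<forall>c v. D (cscale c v) = c * D v)"

definition cdifferentiable :: "('m::finite pt \<Rightarrow> complex) \<Rightarrow> 'm pt \<Rightarrow> bool" where
  "cdifferentiable g p \<longleftrightarrow> (\<exists>D. has_cderivative g D p)"

lemma holo_germ_iff_eventually: "holo_germ g \<longleftrightarrow> (\<forall>\<^sub>F p in nhds 0. cdifferentiable g p)"
  unfolding holo_germ_def eventually_nhds cdifferentiable_def has_cderivative_def by blast

lemma has_cderivative_line:
  assumes "has_cderivative g D (p + cscale t0 w)"
  shows "((\<lambda>t. g (p + cscale t w)) has_field_derivative D w) (at t0)"
proof -
  have "((\<lambda>t. p + cscale t w) has_derivative (\<lambda>t. cscale t w)) (at t0)"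
    by (auto intro!: derivative_eq_intros bounded_linear.has_derivative[OF bounded_linear_cscale])
  then have "((g \<circ> (\<lambda>t. p + cscale t w)) has_derivative (D \<circ> (\<lambda>t. cscale t w))) (at t0)"
    using assms unfolding has_cderivative_def by (intro diff_chain_at) auto
  moreover have "D \<circ> (\<lambda>t. cscale t w) = (\<lambda>t. D w * t)"
    by (intro ext) (metis assms has_cderivative_def o_apply mult.commute)
  ultimately show ?thesis
    by (simp add: has_field_derivative_def o_def)
qed

lemma has_cderivative_imp_dirderiv: "has_cderivative g D p \<Longrightarrow> dirderiv g p w = D w"
  unfolding dirderiv_def by (intro DERIV_imp_deriv has_cderivative_line) simp

lemma has_cderivative_dirderiv: "cdifferentiable g p \<Longrightarrow> has_cderivative g (dirderiv g p) p"
proof -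
  assume "cdifferentiable g p"
  then obtain D where D: "has_cderivative g D p"
    unfolding cdifferentiable_def by blast
  moreover from D have "dirderiv g p = D"
    by (auto dest: has_cderivative_imp_dirderiv)
  ultimately show ?thesis by simp
qed

lemma dirderiv_cscale: "cdifferentiable g p \<Longrightarrow> dirderiv g p (cscale c w) = c * dirderiv g p w"
  using has_cderivative_dirderiv unfolding has_cderivative_def by blast

lemma cdifferentiable_imp_isCont: "cdifferentiable g p \<Longrightarrow> isCont g p"
  unfolding cdifferentiable_def has_cderivative_def using has_derivative_continuous by blast

lemma holomorphic_on_line:
  assumes "open A" and "\<And>t. t \<in> A \<Longrightarrow> cdifferentiable g (q + cscale t w)"
  shows "(\<lambda>t. g (q + cscale t w)) holomorphic_on A"
  unfolding holomorphic_on_open[OF \<open>open A\<close>]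
  using assms(2) has_cderivative_line[OF has_cderivative_dirderiv] by blast

lemma has_cderivative_const: "has_cderivative (\<lambda>q. c) (\<lambda>w. 0) p"
  unfolding has_cderivative_def by (auto intro!: derivative_eq_intros)

lemma has_cderivative_fst: "has_cderivative fst fst p"
  unfolding has_cderivative_def by (auto simp: cscale_def intro!: derivative_eq_intros)

lemma has_cderivative_add:
  "has_cderivative f Df p \<Longrightarrow> has_cderivative g Dg p \<Longrightarrow>
    has_cderivative (\<lambda>q. f q + g q) (\<lambda>w. Df w + Dg w) p"
  unfolding has_cderivative_def by (auto simp: algebra_simps intro!: derivative_eq_intros)

lemma has_cderivative_diff:
  "has_cderivative f Df p \<Longrightarrow> has_cderivative g Dg p \<Longrightarrow>
    has_cderivative (\<lambda>q. f q - g q) (\<lambda>w. Df w - Dg w) p"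
  unfolding has_cderivative_def by (auto simp: algebra_simps intro!: derivative_eq_intros)

lemma has_cderivative_mult:
  "has_cderivative f Df p \<Longrightarrow> has_cderivative g Dg p \<Longrightarrow>
    has_cderivative (\<lambda>q. f q * g q) (\<lambda>w. Df w * g p + f p * Dg w) p"
  unfolding has_cderivative_def by (auto simp: algebra_simps intro!: derivative_eq_intros)

lemma has_cderivative_sum:
  "finite A \<Longrightarrow> (\<And>i. i \<in> A \<Longrightarrow> has_cderivative (f i) (Df i) p) \<Longrightarrow>
    has_cderivative (\<lambda>q. \<Sum>i\<in>A. f i q) (\<lambda>w. \<Sum>i\<in>A. Df i w) p"
  by (induction A rule: finite_induct) (auto intro: has_cderivative_const has_cderivative_add)

lemma cdifferentiable_const [simp]: "cdifferentiable (\<lambda>q. c) p"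
  and cdifferentiable_fst [simp]: "cdifferentiable fst p"
  using has_cderivative_const has_cderivative_fst unfolding cdifferentiable_def by blast+

lemma cdifferentiable_add [simp]:
  "cdifferentiable f p \<Longrightarrow> cdifferentiable g p \<Longrightarrow> cdifferentiable (\<lambda>q. f q + g q) p"
  and cdifferentiable_diff [simp]:
  "cdifferentiable f p \<Longrightarrow> cdifferentiable g p \<Longrightarrow> cdifferentiable (\<lambda>q. f q - g q) p"
  and cdifferentiable_mult [simp]:
  "cdifferentiable f p \<Longrightarrow> cdifferentiable g p \<Longrightarrow> cdifferentiable (\<lambda>q. f q * g q) p"
  unfolding cdifferentiable_def
  by (blast intro: has_cderivative_add has_cderivative_diff has_cderivative_mult)+

lemma cdifferentiable_sum [simp]:
  "finite A \<Longrightarrow> (\<And>i. i \<in> A \<Longrightarrow> cdifferentiable (f i) p) \<Longrightarrow> cdifferentiable (\<lambda>q. \<Sum>i\<in>A. f i q) p"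
  by (induction A rule: finite_induct) simp_all

lemma dirderiv_const [simp]: "dirderiv (\<lambda>q. c) p w = 0"
  by (simp add: dirderiv_def)

lemma dirderiv_fst [simp]: "dirderiv fst p w = fst w"
  using has_cderivative_imp_dirderiv[OF has_cderivative_fst] .

lemma dirderiv_add [simp]:
  "cdifferentiable f p \<Longrightarrow> cdifferentiable g p \<Longrightarrow>
    dirderiv (\<lambda>q. f q + g q) p w = dirderiv f p w + dirderiv g p w"
  and dirderiv_mult [simp]:
  "cdifferentiable f p \<Longrightarrow> cdifferentiable g p \<Longrightarrow>
    dirderiv (\<lambda>q. f q * g q) p w = dirderiv f p w * g p + f p * dirderiv g p w"
  by (auto intro!: has_cderivative_imp_dirderiv has_cderivative_dirderiv
      has_cderivative_add has_cderivative_mult)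

lemma dirderiv_sum [simp]:
  "finite A \<Longrightarrow> (\<And>i. i \<in> A \<Longrightarrow> cdifferentiable (f i) p) \<Longrightarrow>
    dirderiv (\<lambda>q. \<Sum>i\<in>A. f i q) p w = (\<Sum>i\<in>A. dirderiv (f i) p w)"
  by (auto intro!: has_cderivative_imp_dirderiv has_cderivative_dirderiv has_cderivative_sum)

lemma dirderiv_snd_ez [simp]: "dirderiv (\<lambda>q. h (snd q)) p ez = 0"
  by (simp add: dirderiv_def)

lemma holo_germ_transform:
  assumes "holo_germ g" and "\<forall>\<^sub>F q in nhds 0. g q = g' q"
  shows "holo_germ g'"
proof -
  have "\<forall>\<^sub>F p in nhds 0. \<forall>\<^sub>F q in nhds p. g q = g' q"
    using assms(2) by (simp add: eventually_eventually)
  with assms(1) show ?thesis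
    unfolding holo_germ_iff_eventually
  proof eventually_elim
    case (elim p)
    then obtain D where D: "has_cderivative g D p" unfolding cdifferentiable_def by blast
    from elim(2) obtain S where "open S" "p \<in> S" "\<And>q. q \<in> S \<Longrightarrow> g q = g' q"
      unfolding eventually_nhds by blast
    with D have "has_cderivative g' D p"
      unfolding has_cderivative_def using has_derivative_transform_within_open by blast
    then show ?case unfolding cdifferentiable_def by blast
  qed
qed

lemma holo_germ_const: "holo_germ (\<lambda>q. c)"
  and holo_germ_fst: "holo_germ fst"
  by (simp_all add: holo_germ_iff_eventually)

lemma holo_germ_add: "holo_germ f \<Longrightarrow> holo_germ g \<Longrightarrow> holo_germ (\<lambda>q. f q + g q)"
  and holo_germ_diff: "holo_germ f \<Longrightarrow> holo_germ g \<Longrightarrow> holo_germ (\<lambda>q. f q - g q)"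
  and holo_germ_mult: "holo_germ f \<Longrightarrow> holo_germ g \<Longrightarrow> holo_germ (\<lambda>q. f q * g q)"
  unfolding holo_germ_iff_eventually by (auto elim: eventually_elim2)

lemma holo_germ_sum:
  "finite A \<Longrightarrow> (\<And>i. i \<in> A \<Longrightarrow> holo_germ (f i)) \<Longrightarrow> holo_germ (\<lambda>q. \<Sum>i\<in>A. f i q)"
  by (induction A rule: finite_induct) (simp_all add: holo_germ_const holo_germ_add)

section \<open>Partial derivatives of holomorphic germs are holomorphic\<close>

lemma holomorphic_second_deriv_bound:
  fixes \<phi> :: "complex \<Rightarrow> complex"
  assumes holo: "\<phi> holomorphic_on ball 0 \<rho>" and bnd: "\<And>t. cmod t < \<rho> \<Longrightarrow> cmod (\<phi> t) \<le> M"
    and x: "cmod x \<le> \<rho>/2" and "\<rho> > 0"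
  shows "cmod ((deriv ^^ 2) \<phi> x) \<le> 32 * M / \<rho>\<^sup>2"
proof -
  have sub: "cball x (\<rho>/4) \<subseteq> ball 0 \<rho>"
  proof
    fix y assume "y \<in> cball x (\<rho>/4)"
    then have "cmod (y - x) \<le> \<rho>/4" by (simp add: dist_norm norm_minus_commute)
    then show "y \<in> ball 0 \<rho>"
      using x \<open>\<rho> > 0\<close> norm_triangle_ineq[of x "y - x"] by simp
  qed
  have "cmod ((deriv ^^ 2) \<phi> x) \<le> fact 2 * M / (\<rho>/4)\<^sup>2"
  proof (rule Cauchy_inequality)
    show "\<phi> holomorphic_on ball x (\<rho>/4)" "continuous_on (cball x (\<rho>/4)) \<phi>"
      using holo sub holomorphic_on_subset holomorphic_on_imp_continuous_on ball_subset_cball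
      by blast+
    show "cmod (\<phi> y) \<le> M" if "cmod (x - y) = \<rho>/4" for y
      using sub that by (intro bnd) (auto simp: dist_norm)
  qed (use \<open>\<rho> > 0\<close> in simp)
  then show ?thesis
    by (simp add: numeral_2_eq_2 power2_eq_square field_simps)
qed

lemma holomorphic_difference_quotient_bound:
  fixes \<phi> :: "complex \<Rightarrow> complex"
  assumes holo: "\<phi> holomorphic_on ball 0 \<rho>" and bnd: "\<And>t. cmod t < \<rho> \<Longrightarrow> cmod (\<phi> t) \<le> M"
    and t: "t \<noteq> 0" "cmod t \<le> \<rho>/2"
  shows "cmod ((\<phi> t - \<phi> 0) / t - deriv \<phi> 0) \<le> 32 * M * cmod t / \<rho>\<^sup>2"
proof -
  have "0 < cmod t" using t by simp
  then have \<rho>: "\<rho> > 0" using t by linarith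
  have der: "((deriv ^^ i) \<phi> has_field_derivative (deriv ^^ Suc i) \<phi> x) (at x within cball 0 (\<rho>/2))"
    if "x \<in> cball 0 (\<rho>/2)" for i x
  proof -
    have "(deriv ^^ i) \<phi> holomorphic_on ball 0 \<rho>"
      by (rule holomorphic_higher_deriv[OF holo]) simp
    moreover have "x \<in> ball 0 \<rho>" using that \<rho> by simp
    ultimately show ?thesis using holomorphic_derivI by simp
  qed
  have B: "cmod ((deriv ^^ Suc 1) \<phi> x) \<le> 32 * M / \<rho>\<^sup>2" if "x \<in> cball 0 (\<rho>/2)" for x
    using holomorphic_second_deriv_bound[OF holo bnd _ \<rho>] that by (simp add: numeral_2_eq_2)
  have "cmod ((deriv ^^ 0) \<phi> t - (\<Sum>i\<le>1. (deriv ^^ i) \<phi> 0 * (t - 0) ^ i / fact i))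
        \<le> 32 * M / \<rho>\<^sup>2 * cmod (t - 0) ^ Suc 1 / fact 1"
    by (rule complex_Taylor[OF _ der B]) (use t \<rho> in simp_all)
  then have "cmod (\<phi> t - \<phi> 0 - deriv \<phi> 0 * t) \<le> 32 * M * cmod t * cmod t / \<rho>\<^sup>2"
    by (simp add: algebra_simps power2_eq_square)
  moreover have "(\<phi> t - \<phi> 0) / t - deriv \<phi> 0 = (\<phi> t - \<phi> 0 - deriv \<phi> 0 * t) / t"
    using t by (simp add: field_simps)
  ultimately show ?thesis
    using t by (simp add: norm_divide divide_le_eq mult_ac)
qed

lemma nonzero_null_sequence:
  assumes "\<delta> > 0"
  obtains hs :: "nat \<Rightarrow> complex" where "hs \<longlonglongrightarrow> 0" "\<And>n. hs n \<noteq> 0" "\<And>n. cmod (hs n) \<le> \<delta>"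
proof
  have "(\<lambda>n. \<delta> * inverse (real (Suc n))) \<longlonglongrightarrow> 0"
    by (intro tendsto_mult_right_zero LIMSEQ_inverse_real_of_nat)
  from tendsto_of_real[OF this, where 'a=complex]
  show "(\<lambda>n. complex_of_real (\<delta> * inverse (real (Suc n)))) \<longlonglongrightarrow> 0"
    by simp
  show "complex_of_real (\<delta> * inverse (real (Suc n))) \<noteq> 0" for n
    unfolding of_real_eq_0_iff using assms by simp
  show "cmod (complex_of_real (\<delta> * inverse (real (Suc n)))) \<le> \<delta>" for n
  proof -
    have "\<delta> * inverse (real (Suc n)) \<le> \<delta>"
      using assms by (auto simp: inverse_le_1_iff intro!: mult_left_le)
    then show ?thesis
      unfolding norm_of_real using assms by simp
  qed
qed

lemma has_derivative_difference_quotient: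
  assumes "cdifferentiable g q" "cdifferentiable g (q + v)"
  shows "((\<lambda>q. (g (q + v) - g q) / c) has_derivative
           (\<lambda>u. (dirderiv g (q + v) u - dirderiv g q u) / c)) (at q)"
proof -
  have "((\<lambda>q. q + v) has_derivative (\<lambda>u. u)) (at q)"
    by (auto intro!: derivative_eq_intros)
  then have "((\<lambda>q. g (q + v)) has_derivative dirderiv g (q + v)) (at q)"
    using diff_chain_at[of "\<lambda>q. q + v" "\<lambda>u. u" q g] has_cderivative_dirderiv[OF assms(2)]
    by (simp add: has_cderivative_def o_def)
  moreover have "(g has_derivative dirderiv g q) (at q)"
    using has_cderivative_dirderiv[OF assms(1)] by (simp add: has_cderivative_def)
  ultimately have "((\<lambda>q. g (q + v) - g q) has_derivative (\<lambda>u. dirderiv g (q + v) u - dirderiv g q u)) (at q)"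
    by (rule has_derivative_diff)
  then show ?thesis
    by (rule bounded_linear.has_derivative[OF bounded_linear_divide])
qed

lemma difference_quotient_tendsto_dirderiv:
  assumes "cdifferentiable g q" and "filterlim hs (at 0) F"
  shows "((\<lambda>n. (g (q + cscale (hs n) w) - g q) / hs n) \<longlongrightarrow> dirderiv g q w) F"
proof -
  have "((\<lambda>t. g (q + cscale t w)) has_field_derivative dirderiv g q w) (at 0)"
    using has_cderivative_line[of g "dirderiv g q" q 0 w] has_cderivative_dirderiv[OF assms(1)] by simp
  then have "((\<lambda>t. (g (q + cscale t w) - g q) / t) \<longlongrightarrow> dirderiv g q w) (at 0)"
    by (simp add: DERIV_def)
  from filterlim_compose[OF this assms(2)] show ?thesis
    by (simp add: o_def)
qed

lemma dirderiv_dirderiv_eq_deriv: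
  "dirderiv (\<lambda>q. dirderiv g q u) p w = deriv (\<lambda>h. dirderiv g (p + cscale h w) u) 0"
  by (simp only: dirderiv_def)

locale bounded_holomorphic_ball =
  fixes g :: "'m::finite pt \<Rightarrow> complex" and R M :: real
  assumes R_pos: "0 < R" and M_pos: "0 < M"
    and cdifferentiable_g: "\<And>q. norm q < R \<Longrightarrow> cdifferentiable g q"
    and bounded_g: "\<And>q. norm q < R \<Longrightarrow> cmod (g q) \<le> M"
begin

lemma holomorphic_on_line_ball:
  assumes "norm q < R/2" "norm u \<le> 1"
  shows "(\<lambda>t. g (q + cscale t u)) holomorphic_on ball 0 (R/2)"
  using assms norm_add_cscale_less[of q "R/2" u _ "R/2"]
  by (intro holomorphic_on_line cdifferentiable_g) auto

lemma dirderiv_bound: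
  assumes "norm q < R/2" "norm u \<le> 1"
  shows "cmod (dirderiv g q u) \<le> 4 * M / R"
proof -
  have holo: "(\<lambda>t. g (q + cscale t u)) holomorphic_on ball 0 (R/2)"
    using holomorphic_on_line_ball[OF assms] .
  have sub: "cball 0 (R/4) \<subseteq> ball (0::complex) (R/2)"
    using R_pos by auto
  have "cmod ((deriv ^^ 1) (\<lambda>t. g (q + cscale t u)) 0) \<le> fact 1 * M / (R/4) ^ 1"
  proof (rule Cauchy_inequality)
    show "(\<lambda>t. g (q + cscale t u)) holomorphic_on ball 0 (R/4)"
      using holo sub ball_subset_cball holomorphic_on_subset by blast
    show "continuous_on (cball 0 (R/4)) (\<lambda>t. g (q + cscale t u))"
      using holo sub holomorphic_on_imp_continuous_on holomorphic_on_subset by blast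
    show "cmod (g (q + cscale t u)) \<le> M" if "cmod (0 - t) = R/4" for t
      using that R_pos norm_add_cscale_less[OF assms(1,2), of t "R/2"] by (intro bounded_g) auto
  qed (use R_pos in simp)
  then show ?thesis
    by (simp add: dirderiv_def mult.commute)
qed

lemma difference_quotient_bound:
  assumes "norm q < R/2" "norm u \<le> 1" "t \<noteq> 0" "cmod t \<le> R/8"
  shows "cmod ((g (q + cscale t u) - g q) / t - dirderiv g q u) \<le> 512 * M * cmod t / R\<^sup>2"
proof -
  have "cmod ((g (q + cscale t u) - g (q + cscale 0 u)) / t - deriv (\<lambda>t. g (q + cscale t u)) 0)
      \<le> 32 * M * cmod t / (R/4)\<^sup>2"
  proof (rule holomorphic_difference_quotient_bound)
    show "(\<lambda>t. g (q + cscale t u)) holomorphic_on ball 0 (R/4)"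
      by (rule holomorphic_on_subset[OF holomorphic_on_line_ball[OF assms(1,2)]]) (use R_pos in auto)
    show "cmod (g (q + cscale s u)) \<le> M" if "cmod s < R/4" for s
      using that R_pos norm_add_cscale_less[OF assms(1,2), of s "R/2"] by (intro bounded_g) auto
  qed (use assms in auto)
  then show ?thesis
    by (simp add: dirderiv_def power2_eq_square field_simps)
qed

lemma difference_quotient_uniform_limit:
  assumes "norm u \<le> 1"
  shows "uniform_limit {q. norm q < R/2} (\<lambda>t q. (g (q + cscale t u) - g q) / t)
           (\<lambda>q. dirderiv g q u) (at 0)"
  unfolding uniform_limit_iff
proof (intro allI impI)
  fix e :: real assume "e > 0"
  define d where "d = min (R/8) (e * R\<^sup>2 / (512 * M))"
  have "d > 0" using \<open>e > 0\<close> R_pos M_pos by (simp add: d_def)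
  have "dist ((g (q + cscale t u) - g q) / t) (dirderiv g q u) < e"
    if "t \<noteq> 0" "cmod t < d" "norm q < R/2" for t q
  proof -
    have "dist ((g (q + cscale t u) - g q) / t) (dirderiv g q u) \<le> 512 * M * cmod t / R\<^sup>2"
      using difference_quotient_bound[OF that(3) assms that(1)] that(2)
      by (simp add: dist_norm d_def)
    also have "\<dots> < 512 * M * d / R\<^sup>2"
      using that(2) M_pos R_pos by (simp add: divide_strict_right_mono)
    also have "\<dots> \<le> e"
      using M_pos R_pos by (simp add: d_def min_def field_simps)
    finally show ?thesis .
  qed
  then show "\<forall>\<^sub>F t in at 0. \<forall>q\<in>{q. norm q < R/2}.
      dist ((g (q + cscale t u) - g q) / t) (dirderiv g q u) < e"
    unfolding eventually_at using \<open>d > 0\<close> by (auto simp: dist_norm)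
qed

lemma holomorphic_on_dirderiv_line_unit:
  assumes "norm p < R/4" "norm u \<le> 1" "norm w \<le> 1"
  shows "(\<lambda>h. dirderiv g (p + cscale h w) u) holomorphic_on ball 0 (R/8)"
proof -
  define F where "F t h = (g ((p + cscale h w) + cscale t u) - g (p + cscale h w)) / t" for t h
  have ul: "uniform_limit (cball 0 (R/8)) F (\<lambda>h. dirderiv g (p + cscale h w) u) (at 0)"
    unfolding F_def
  proof (rule uniform_limit_compose'[OF difference_quotient_uniform_limit[OF assms(2)]])
    show "(\<lambda>h. p + cscale h w) \<in> cball 0 (R/8) \<rightarrow> {q. norm q < R/2}"
      using R_pos norm_add_cscale_less[OF assms(1,3), of _ "R/4"] by force
  qed
  have holo_F: "F t holomorphic_on ball 0 (R/2)" if "cmod t < R/4" for t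
  proof -
    have "norm (p + cscale t u) < R/2"
      using norm_add_cscale_less[OF assms(1,2) that] by simp
    then have "(\<lambda>h. g ((p + cscale t u) + cscale h w)) holomorphic_on ball 0 (R/2)"
      by (rule holomorphic_on_line_ball[OF _ assms(3)])
    moreover have "(\<lambda>h. g (p + cscale h w)) holomorphic_on ball 0 (R/2)"
      using assms(1,3) R_pos by (intro holomorphic_on_line_ball) auto
    ultimately show ?thesis
      unfolding F_def by (simp add: add_ac holomorphic_intros)
  qed
  have ev: "\<forall>\<^sub>F t in at 0. continuous_on (cball 0 (R/8)) (F t) \<and> F t holomorphic_on ball 0 (R/8)"
  proof -
    have sub: "cball 0 (R/8) \<subseteq> ball (0::complex) (R/2)"
      using R_pos by auto
    have "continuous_on (cball 0 (R/8)) (F t) \<and> F t holomorphic_on ball 0 (R/8)" if "cmod t < R/4" for t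
      using holomorphic_on_subset[OF holo_F[OF that] sub] ball_subset_cball
      by (meson holomorphic_on_imp_continuous_on holomorphic_on_subset)
    then show ?thesis
      unfolding eventually_at using R_pos by (intro exI[of _ "R/4"]) auto
  qed
  show ?thesis
    using holomorphic_uniform_limit[OF ev ul] trivial_limit_at by blast
qed

lemma second_difference_quotient_bound_unit:
  assumes "norm p < R/4" "norm u \<le> 1" "norm w \<le> 1" "h \<noteq> 0" "cmod h \<le> R/16"
  shows "cmod ((dirderiv g (p + cscale h w) u - dirderiv g p u) / h
                - dirderiv (\<lambda>q. dirderiv g q u) p w) \<le> 8192 * M / R^3 * cmod h"
proof -
  have "cmod ((dirderiv g (p + cscale h w) u - dirderiv g (p + cscale 0 w) u) / h
               - deriv (\<lambda>h. dirderiv g (p + cscale h w) u) 0) \<le> 32 * (4 * M / R) * cmod h / (R/8)\<^sup>2"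
  proof (rule holomorphic_difference_quotient_bound)
    show "(\<lambda>h. dirderiv g (p + cscale h w) u) holomorphic_on ball 0 (R/8)"
      using holomorphic_on_dirderiv_line_unit[OF assms(1-3)] .
    show "cmod (dirderiv g (p + cscale s w) u) \<le> 4 * M / R" if "cmod s < R/8" for s
      using that R_pos norm_add_cscale_less[OF assms(1,3), of s "R/4"] by (intro dirderiv_bound assms) auto
  qed (use assms in auto)
  then show ?thesis
    by (simp add: dirderiv_def power2_eq_square power3_eq_cube field_simps)
qed

lemma holomorphic_on_dirderiv_line:
  assumes "norm p < R/4" "norm w \<le> 1"
  shows "(\<lambda>h. dirderiv g (p + cscale h w) u) holomorphic_on ball 0 (R/8)"
proof -
  obtain u1 where u1: "norm u1 \<le> 1" "u = cscale (of_real (norm u)) u1"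
    using cscale_normalize by blast
  have "(\<lambda>h. of_real (norm u) * dirderiv g (p + cscale h w) u1) holomorphic_on ball 0 (R/8)"
    using holomorphic_on_dirderiv_line_unit[OF assms(1) u1(1) assms(2)] by (simp add: holomorphic_intros)
  moreover have "of_real (norm u) * dirderiv g (p + cscale h w) u1 = dirderiv g (p + cscale h w) u"
    if "h \<in> ball 0 (R/8)" for h
    using that R_pos norm_add_cscale_less[OF assms(1,2), of h "R/4"]
    by (subst u1(2), intro dirderiv_cscale[symmetric] cdifferentiable_g) auto
  ultimately show ?thesis
    by (rule holomorphic_transform)
qed

lemma second_dirderiv_cscale:
  assumes "norm p < R/4" "norm w \<le> 1"
  shows "dirderiv (\<lambda>q. dirderiv g q (cscale c u)) p w = c * dirderiv (\<lambda>q. dirderiv g q u) p w"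
proof -
  have "\<forall>\<^sub>F h in nhds 0. dirderiv g (p + cscale h w) (cscale c u) = c * dirderiv g (p + cscale h w) u"
  proof (rule eventually_nhds_in_open[of "ball 0 (R/8)", THEN eventually_mono])
    fix h :: complex assume "h \<in> ball 0 (R/8)"
    then show "dirderiv g (p + cscale h w) (cscale c u) = c * dirderiv g (p + cscale h w) u"
      using R_pos norm_add_cscale_less[OF assms, of h "R/4"] by (intro dirderiv_cscale cdifferentiable_g) auto
  qed (use R_pos in auto)
  moreover have "(\<lambda>h. dirderiv g (p + cscale h w) u) field_differentiable at 0"
    using holomorphic_on_dirderiv_line[OF assms] R_pos
    by (intro holomorphic_on_imp_differentiable_at[of _ "ball 0 (R/8)"]) auto
  ultimately show ?thesis
    unfolding dirderiv_dirderiv_eq_deriv by (simp add: deriv_cong_ev deriv_cmult)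
qed

lemma second_difference_quotient_bound:
  assumes "norm p < R/4" "norm w \<le> 1" "h \<noteq> 0" "cmod h \<le> R/16"
  shows "cmod ((dirderiv g (p + cscale h w) u - dirderiv g p u) / h
                - dirderiv (\<lambda>q. dirderiv g q u) p w) \<le> 8192 * M / R^3 * cmod h * norm u"
proof -
  obtain u1 where u1: "norm u1 \<le> 1" "u = cscale (of_real (norm u)) u1"
    using cscale_normalize by blast
  have "norm (p + cscale h w) < R" "norm p < R"
    using assms R_pos norm_add_cscale_less[OF assms(1,2), of h "R/4"] by auto
  then have "(dirderiv g (p + cscale h w) u - dirderiv g p u) / h - dirderiv (\<lambda>q. dirderiv g q u) p w
      = of_real (norm u) * ((dirderiv g (p + cscale h w) u1 - dirderiv g p u1) / h
                             - dirderiv (\<lambda>q. dirderiv g q u1) p w)"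
    by (subst (1 2 3) u1(2)) (simp add: dirderiv_cscale cdifferentiable_g second_dirderiv_cscale[OF assms(1,2)]
        algebra_simps diff_divide_distrib)
  also have "cmod \<dots> \<le> norm u * (8192 * M / R^3 * cmod h)"
    unfolding norm_mult norm_of_real abs_norm_cancel
    using second_difference_quotient_bound_unit[OF assms(1) u1(1) assms(2-4)] by (intro mult_left_mono) auto
  finally show ?thesis
    by (simp add: mult_ac)
qed

lemma second_difference_quotient_uniform:
  assumes w: "norm w \<le> 1" and hs: "hs \<longlonglongrightarrow> 0" "\<And>n. hs n \<noteq> 0" and "e > 0"
  shows "\<forall>\<^sub>F n in sequentially. \<forall>q\<in>ball 0 (R/4). \<forall>u.
      cmod ((dirderiv g (q + cscale (hs n) w) u - dirderiv g q u) / hs n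
            - dirderiv (\<lambda>q. dirderiv g q u) q w) \<le> e * norm u"
proof -
  define K where "K = 8192 * M / R^3"
  have "K > 0"
    using M_pos R_pos by (simp add: K_def)
  have "\<forall>\<^sub>F n in sequentially. cmod (hs n) < min (R/16) (e/K)"
    by (rule order_tendstoD(2)[OF tendsto_norm_zero[OF hs(1)]]) (use R_pos \<open>e > 0\<close> \<open>K > 0\<close> in simp)
  then show ?thesis
  proof eventually_elim
    case (elim n)
    show ?case
    proof (intro ballI allI)
      fix q :: "'m pt" and u assume "q \<in> ball 0 (R/4)"
      then have "norm q < R/4" by simp
      with elim have "cmod ((dirderiv g (q + cscale (hs n) w) u - dirderiv g q u) / hs n
                        - dirderiv (\<lambda>q. dirderiv g q u) q w) \<le> K * cmod (hs n) * norm u"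
        unfolding K_def using second_difference_quotient_bound[OF _ w hs(2)] by simp
      also have "\<dots> \<le> e * norm u"
        using elim \<open>K > 0\<close> by (intro mult_right_mono) (auto simp: field_simps)
      finally show "cmod ((dirderiv g (q + cscale (hs n) w) u - dirderiv g q u) / hs n
                      - dirderiv (\<lambda>q. dirderiv g q u) q w) \<le> e * norm u" .
    qed
  qed
qed

lemma has_derivative_dirderiv:
  assumes w: "norm w \<le> 1" and p: "norm p < R/4"
  shows "((\<lambda>q. dirderiv g q w) has_derivative (\<lambda>u. dirderiv (\<lambda>q. dirderiv g q u) p w)) (at p)"
proof -
  obtain hs where hs_lim: "hs \<longlonglongrightarrow> 0" and hs: "\<And>n. hs n \<noteq> 0" "\<And>n. cmod (hs n) \<le> R/16"
    using nonzero_null_sequence[of "R/16"] R_pos by auto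
  have hs_at: "filterlim hs (at 0) sequentially"
    using hs_lim hs by (intro filterlim_atI) auto
  have in_ball: "norm (q + cscale (hs n) w) < R" "norm q < R" if "q \<in> ball 0 (R/4)" for q n
    using that hs[of n] R_pos norm_add_cscale_less[OF _ w, of q "R/4" "hs n" "R/4"] by auto
  have derivative: "((\<lambda>q. (g (q + cscale (hs n) w) - g q) / hs n) has_derivative
      (\<lambda>u. (dirderiv g (q + cscale (hs n) w) u - dirderiv g q u) / hs n)) (at q within ball 0 (R/4))"
    if "q \<in> ball 0 (R/4)" for n q
    using in_ball[OF that]
    by (intro has_derivative_at_withinI[OF has_derivative_difference_quotient] cdifferentiable_g)
  have pointwise: "(\<lambda>n. (g (q + cscale (hs n) w) - g q) / hs n) \<longlonglongrightarrow> dirderiv g q w"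
    if "q \<in> ball 0 (R/4)" for q
    using difference_quotient_tendsto_dirderiv[OF cdifferentiable_g[OF in_ball(2)[OF that]] hs_at] .
  have "0 \<in> ball 0 (R/4)"
    using R_pos by simp
  from has_derivative_sequence[OF convex_ball derivative
      second_difference_quotient_uniform[OF w hs_lim hs(1)] this pointwise[OF this]]
  obtain G where G: "\<And>q. q \<in> ball 0 (R/4) \<Longrightarrow> (\<lambda>n. (g (q + cscale (hs n) w) - g q) / hs n) \<longlonglongrightarrow> G q
      \<and> (G has_derivative (\<lambda>u. dirderiv (\<lambda>q. dirderiv g q u) q w)) (at q within ball 0 (R/4))"
    by blast
  have G_eq: "G q = dirderiv g q w" if "q \<in> ball 0 (R/4)" for q
    using G[OF that] pointwise[OF that] by (blast intro: LIMSEQ_unique)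
  have "p \<in> ball 0 (R/4)"
    using p by simp
  with G have "(G has_derivative (\<lambda>u. dirderiv (\<lambda>q. dirderiv g q u) p w)) (at p)"
    by (simp add: at_within_open[OF _ open_ball])
  then show ?thesis
    by (rule has_derivative_transform_within_open[OF _ open_ball \<open>p \<in> ball 0 (R/4)\<close> G_eq])
qed

lemma cdifferentiable_dirderiv:
  "norm w \<le> 1 \<Longrightarrow> norm p < R/4 \<Longrightarrow> cdifferentiable (\<lambda>q. dirderiv g q w) p"
  unfolding cdifferentiable_def has_cderivative_def
  using has_derivative_dirderiv second_dirderiv_cscale by blast

end

lemma holo_germ_dirderiv:
  fixes g :: "'m::finite pt \<Rightarrow> complex"
  assumes "holo_germ g"
  shows "holo_germ (\<lambda>q. dirderiv g q w)"
proof -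
  obtain r where r: "r > 0" "\<And>q. norm q < r \<Longrightarrow> cdifferentiable g q"
    using assms unfolding holo_germ_iff_eventually eventually_nhds_metric by (auto simp: dist_norm)
  have "continuous_on (cball 0 (r/2)) g"
    using r by (intro continuous_at_imp_continuous_on ballI cdifferentiable_imp_isCont) auto
  then have "bounded (g ` cball 0 (r/2))"
    by (intro compact_imp_bounded compact_continuous_image) auto
  then obtain M where M: "\<And>q. q \<in> cball 0 (r/2) \<Longrightarrow> cmod (g q) \<le> M"
    unfolding bounded_iff by blast
  interpret bounded_holomorphic_ball g "r/2" "max M 1"
    using r M by unfold_locales (auto simp: le_max_iff_disj)
  obtain w1 where w1: "norm w1 \<le> 1" "w = cscale (of_real (norm w)) w1"
    using cscale_normalize by blast
  have near: "\<forall>\<^sub>F q in nhds (0::'m pt). norm q < \<rho>" if "\<rho> > 0" for \<rho>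
    using eventually_nhds_ball[OF that, of "0::'m pt"] by (simp add: dist_norm)
  then have "holo_germ (\<lambda>q. dirderiv g q w1)"
    unfolding holo_germ_iff_eventually using r(1)
    by (intro eventually_mono[OF near[of "r/8"]]) (simp_all add: cdifferentiable_dirderiv w1)
  then have "holo_germ (\<lambda>q. of_real (norm w) * dirderiv g q w1)"
    by (intro holo_germ_mult holo_germ_const)
  moreover have "\<forall>\<^sub>F q in nhds 0. of_real (norm w) * dirderiv g q w1 = dirderiv g q w"
    using near[OF r(1)] by eventually_elim (metis dirderiv_cscale r(2) w1(2))
  ultimately show ?thesis
    by (rule holo_germ_transform)
qed

section \<open>One-forms and Cartan's formula\<close>

lemma wedge_one_two: "wedge 1 \<alpha> \<beta> p [u, v] = \<alpha> p [u] * \<beta> p [v] - \<alpha> p [v] * \<beta> p [u]"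
  and wedge_one_three: "wedge 1 \<alpha> \<beta> p [u, v, x] =
    \<alpha> p [u] * \<beta> p [v, x] - \<alpha> p [v] * \<beta> p [u, x] + \<alpha> p [x] * \<beta> p [u, v]"
proof -
  have singletons: "{I. I \<subseteq> {..<n} \<and> card I = 1} = (\<lambda>i. {i}) ` {..<n}" for n :: nat
    by (auto simp: card_1_singleton_iff)
  have "wedge 1 \<alpha> \<beta> p vs = (\<Sum>i<length vs. (-1)^i * \<alpha> p (nths vs {i}) * \<beta> p (nths vs (-{i})))" for vs
    unfolding wedge_def singletons by (subst sum.reindex) (auto simp: inj_on_def)
  then show "wedge 1 \<alpha> \<beta> p [u, v] = \<alpha> p [u] * \<beta> p [v] - \<alpha> p [v] * \<beta> p [u]"
    and "wedge 1 \<alpha> \<beta> p [u, v, x] =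
      \<alpha> p [u] * \<beta> p [v, x] - \<alpha> p [v] * \<beta> p [u, x] + \<alpha> p [x] * \<beta> p [u, v]"
    by (simp_all add: numeral_2_eq_2 numeral_3_eq_3 lessThan_Suc nths_Cons)
qed

lemma ext_d_zero_form: "ext_d (zero_form_of f) p [v] = dirderiv f p v"
  by (simp add: ext_d_def zero_form_of_def)

lemma ext_d_two: "ext_d \<alpha> p [u, v] = dirderiv (\<lambda>q. \<alpha> q [v]) p u - dirderiv (\<lambda>q. \<alpha> q [u]) p v"
  by (simp add: ext_d_def numeral_2_eq_2 lessThan_Suc nths_Cons)

definition one_form :: "('m::finite pt \<Rightarrow> complex) \<Rightarrow> ('m \<Rightarrow> 'm pt \<Rightarrow> complex) \<Rightarrow> 'm form" where
  "one_form e c p vs = e p * fst (hd vs) + (\<Sum>i\<in>UNIV. c i p * snd (hd vs) $ i)"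

lemma dirderiv_one_form:
  assumes "cdifferentiable e p" "\<And>i. cdifferentiable (c i) p"
  shows "dirderiv (\<lambda>q. one_form e c q [u]) p w =
    dirderiv e p w * fst u + (\<Sum>i\<in>UNIV. dirderiv (c i) p w * snd u $ i)"
  by (simp add: one_form_def assms)

lemma ext_d_one_form:
  assumes "cdifferentiable e p" "\<And>i. cdifferentiable (c i) p"
  shows "ext_d (one_form e c) p [u, v] =
    dirderiv e p u * fst v + (\<Sum>i\<in>UNIV. dirderiv (c i) p u * snd v $ i)
    - (dirderiv e p v * fst u + (\<Sum>i\<in>UNIV. dirderiv (c i) p v * snd u $ i))"
  by (simp add: ext_d_two dirderiv_one_form assms)

lemma lie1_one_form_cartan:
  fixes X :: "'m::finite pt \<Rightarrow> 'm pt"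
  assumes "cdifferentiable e p" "\<And>i. cdifferentiable (c i) p"
    and "cdifferentiable (\<lambda>q. fst (X q)) p" "\<And>i. cdifferentiable (\<lambda>q. snd (X q) $ i) p"
  shows "lie1 X (one_form e c) p [v] =
    dirderiv (\<lambda>q. one_form e c q [X q]) p v + ext_d (one_form e c) p [X p, v]"
  by (simp add: lie1_def vfderiv_def ext_d_one_form dirderiv_one_form one_form_def assms
      sum.distrib algebra_simps)

lemma interior_identity_iff_lie1:
  assumes "\<omega> p [X p] = f p"
    and "\<And>u. lie1 X \<omega> p [u] = dirderiv f p u + ext_d \<omega> p [X p, u]"
  shows "iprod (\<lambda>q. z) (iprod X (wedge 1 \<omega> (ext_d \<omega>))) p [v] =
           iprod (\<lambda>q. z) (fadd (fscale f (ext_d \<omega>)) (wedge 1 \<omega> (ext_d (zero_form_of f)))) p [v]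
         \<longleftrightarrow> \<omega> p [z] * lie1 X \<omega> p [v] = \<omega> p [v] * lie1 X \<omega> p [z]"
proof -
  have "iprod (\<lambda>q. z) (iprod X (wedge 1 \<omega> (ext_d \<omega>))) p [v] -
        iprod (\<lambda>q. z) (fadd (fscale f (ext_d \<omega>)) (wedge 1 \<omega> (ext_d (zero_form_of f)))) p [v]
      = \<omega> p [v] * lie1 X \<omega> p [z] - \<omega> p [z] * lie1 X \<omega> p [v]"
    unfolding iprod_def fadd_def fscale_def wedge_one_two wedge_one_three ext_d_zero_form
    by (simp add: assms algebra_simps)
  then show ?thesis
    by (metis eq_iff_diff_eq_0)
qed

lemma germ_eq_one_iff: "germ_eq 1 \<alpha> \<beta> \<longleftrightarrow> (\<forall>\<^sub>F p in nhds 0. \<forall>v. \<alpha> p [v] = \<beta> p [v])"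
proof -
  have "(\<forall>vs. length vs = 1 \<longrightarrow> \<alpha> p vs = \<beta> p vs) \<longleftrightarrow> (\<forall>v. \<alpha> p [v] = \<beta> p [v])" for p
    by (metis One_nat_def length_Suc_conv length_0_conv list.size(3,4))
  then show ?thesis
    unfolding germ_eq_def eventually_nhds by simp
qed

lemma holo_multiple_iff:
  assumes "holo_germ h0" and "\<forall>\<^sub>F p in nhds 0. \<omega> p [z] = 1 \<and> \<alpha> p [z] = h0 p"
  shows "(\<exists>h. holo_germ h \<and> germ_eq 1 \<alpha> (fscale h \<omega>)) \<longleftrightarrow> germ_eq 1 \<alpha> (fscale h0 \<omega>)"
proof
  assume "\<exists>h. holo_germ h \<and> germ_eq 1 \<alpha> (fscale h \<omega>)"
  then obtain h where "\<forall>\<^sub>F p in nhds 0. \<forall>v. \<alpha> p [v] = h p * \<omega> p [v]"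
    unfolding germ_eq_one_iff fscale_def by blast
  with assms(2) show "germ_eq 1 \<alpha> (fscale h0 \<omega>)"
    unfolding germ_eq_one_iff fscale_def
  proof eventually_elim
    case (elim p)
    then have "h p = h0 p" by (metis mult.right_neutral)
    with elim show ?case by simp
  qed
qed (use assms(1) in blast)

lemma interior_identity_germ_iff:
  assumes "\<forall>\<^sub>F p in nhds 0. \<omega> p [X p] = f p \<and> \<omega> p [z] = 1 \<and> lie1 X \<omega> p [z] = h0 p
      \<and> (\<forall>u. lie1 X \<omega> p [u] = dirderiv f p u + ext_d \<omega> p [X p, u])"
  shows "germ_eq 1 (lie1 X \<omega>) (fscale h0 \<omega>) \<longleftrightarrow>
    germ_eq 1 (iprod (\<lambda>p. z) (iprod X (wedge 1 \<omega> (ext_d \<omega>))))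
              (iprod (\<lambda>p. z) (fadd (fscale f (ext_d \<omega>)) (wedge 1 \<omega> (ext_d (zero_form_of f)))))"
proof -
  have "\<forall>\<^sub>F p in nhds 0. \<forall>v. lie1 X \<omega> p [v] = h0 p * \<omega> p [v] \<longleftrightarrow>
    iprod (\<lambda>p. z) (iprod X (wedge 1 \<omega> (ext_d \<omega>))) p [v] =
    iprod (\<lambda>p. z) (fadd (fscale f (ext_d \<omega>)) (wedge 1 \<omega> (ext_d (zero_form_of f)))) p [v]"
    using assms
  proof eventually_elim
    case (elim p)
    then have "iprod (\<lambda>p. z) (iprod X (wedge 1 \<omega> (ext_d \<omega>))) p [v] =
          iprod (\<lambda>p. z) (fadd (fscale f (ext_d \<omega>)) (wedge 1 \<omega> (ext_d (zero_form_of f)))) p [v]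
        \<longleftrightarrow> \<omega> p [z] * lie1 X \<omega> p [v] = \<omega> p [v] * lie1 X \<omega> p [z]" for v
      by (intro interior_identity_iff_lie1) auto
    also have "\<dots> v \<longleftrightarrow> lie1 X \<omega> p [v] = h0 p * \<omega> p [v]" for v
      using elim by (simp add: mult.commute)
    finally show ?case
      by blast
  qed
  then show ?thesis
    unfolding germ_eq_one_iff fscale_def by (intro eventually_subst) (auto elim: eventually_mono)
qed

lemma lie1_first_type_form:
  fixes a :: "'m::finite \<Rightarrow> (complex, 'm) vec \<Rightarrow> complex"
    and b s :: "'m \<Rightarrow> 'm pt \<Rightarrow> complex" and f :: "'m pt \<Rightarrow> complex"
  assumes \<omega>: "\<omega> = (\<lambda>p vs. fst (hd vs) + (\<Sum>i\<in>UNIV. (a i (snd p) + fst p * b i p) * (snd (hd vs) $ i)))"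
    and X: "X = (\<lambda>p. (f p - (\<Sum>i\<in>UNIV. s i p * (a i (snd p) + fst p * b i p)), \<chi> i. s i p))"
    and diff: "cdifferentiable f p" "\<And>i. cdifferentiable (s i) p" "\<And>i. cdifferentiable (b i) p"
      "\<And>i. cdifferentiable (\<lambda>q. a i (snd q)) p"
  shows "\<omega> p [X p] = f p" and "\<omega> p [ez] = 1"
    and "lie1 X \<omega> p [v] = dirderiv f p v + ext_d \<omega> p [X p, v]"
    and "lie1 X \<omega> p [ez] = dirderiv f p ez - (\<Sum>m\<in>UNIV. s m p * b m p)
                              - fst p * (\<Sum>m\<in>UNIV. s m p * dirderiv (b m) p ez)"
proof -
  define c where "c = (\<lambda>i q. a i (snd q) + fst q * b i q)"
  have \<omega>_one_form: "\<omega> = one_form (\<lambda>q. 1) c"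
    by (simp add: \<omega> one_form_def c_def fun_eq_iff)
  have c: "cdifferentiable (c i) p" for i
    using diff by (simp add: c_def)
  have \<omega>_X: "\<omega> q [X q] = f q" for q
    by (simp add: \<omega> X mult.commute)
  then show "\<omega> p [X p] = f p" .
  show "\<omega> p [ez] = 1"
    by (simp add: \<omega>)
  show cartan: "lie1 X \<omega> p [v] = dirderiv f p v + ext_d \<omega> p [X p, v]" for v
    using lie1_one_form_cartan[of "\<lambda>q. 1" p c X v] \<omega>_X diff c by (simp add: \<omega>_one_form X c_def)
  have "dirderiv (c i) p ez = b i p + fst p * dirderiv (b i) p ez" for i
    using diff by (simp add: c_def)
  then have "ext_d \<omega> p [X p, ez] =
      - (\<Sum>m\<in>UNIV. s m p * b m p) - fst p * (\<Sum>m\<in>UNIV. s m p * dirderiv (b m) p ez)"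
    using c by (simp add: \<omega>_one_form ext_d_one_form X algebra_simps sum.distrib sum_distrib_left sum_negf)
  then show "lie1 X \<omega> p [ez] = dirderiv f p ez - (\<Sum>m\<in>UNIV. s m p * b m p)
                              - fst p * (\<Sum>m\<in>UNIV. s m p * dirderiv (b m) p ez)"
    using cartan[of ez] by simp
qed

lemma eventually_lie1_first_type_form:
  fixes a :: "'m::finite \<Rightarrow> (complex, 'm) vec \<Rightarrow> complex"
    and b s :: "'m \<Rightarrow> 'm pt \<Rightarrow> complex" and f :: "'m pt \<Rightarrow> complex"
  assumes \<omega>: "\<omega> = (\<lambda>p vs. fst (hd vs) + (\<Sum>i\<in>UNIV. (a i (snd p) + fst p * b i p) * (snd (hd vs) $ i)))"
    and X: "X = (\<lambda>p. (f p - (\<Sum>i\<in>UNIV. s i p * (a i (snd p) + fst p * b i p)), \<chi> i. s i p))"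
    and holo: "\<And>i. holo_germ (\<lambda>p. a i (snd p))" "\<And>i. holo_germ (b i)" "holo_germ f" "\<And>i. holo_germ (s i)"
  shows "\<forall>\<^sub>F p in nhds 0. \<omega> p [X p] = f p \<and> \<omega> p [ez] = 1
    \<and> lie1 X \<omega> p [ez] = dirderiv f p ez - (\<Sum>m\<in>UNIV. s m p * b m p)
                         - fst p * (\<Sum>m\<in>UNIV. s m p * dirderiv (b m) p ez)
    \<and> (\<forall>u. lie1 X \<omega> p [u] = dirderiv f p u + ext_d \<omega> p [X p, u])"
proof -
  have "\<forall>\<^sub>F p in nhds 0. cdifferentiable f p \<and>
      (\<forall>i. cdifferentiable (s i) p \<and> cdifferentiable (b i) p \<and> cdifferentiable (\<lambda>q. a i (snd q)) p)"
    using holo unfolding holo_germ_iff_eventually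
    by (intro eventually_conj eventually_all_finite) auto
  then show ?thesis
  proof eventually_elim
    case (elim p)
    then show ?case
      using lie1_first_type_form[OF \<omega> X, of p] by blast
  qed
qed

theorem lemma3p2:
  fixes k :: nat
    and a :: "'m::{finite,linorder} \<Rightarrow> (complex, 'm) vec \<Rightarrow> complex"
    and b :: "'m::{finite,linorder} \<Rightarrow> 'm pt \<Rightarrow> complex"
    and f :: "'m::{finite,linorder} pt \<Rightarrow> complex"
    and s :: "'m::{finite,linorder} \<Rightarrow> 'm pt \<Rightarrow> complex"
  defines "\<omega> \<equiv> (\<lambda>p vs. fst (hd vs) + (\<Sum>i\<in>UNIV. (a i (snd p) + fst p * b i p) * (snd (hd vs) $ i)))"
    and "X \<equiv> (\<lambda>p. (f p - (\<Sum>i\<in>UNIV. s i p * (a i (snd p) + fst p * b i p)), \<chi> i. s i p))"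
    and "Z \<equiv> (\<lambda>p. ez)"
  assumes "k \<ge> 1"
    and "CARD('m::{finite,linorder}) = 2 * k"
    and "\<forall>i. holo_germ (\<lambda>p. a i (snd p))"
    and "\<forall>i. holo_germ (b i)"
    and "holo_germ f"
    and "\<forall>i. holo_germ (s i)"
    and "sing_contact_first_type_S k \<omega>"
  shows "((\<exists>h. holo_germ h \<and> germ_eq 1 (lie1 X \<omega>) (fscale h \<omega>)) \<longleftrightarrow>
            germ_eq 1 (iprod Z (iprod X (wedge 1 \<omega> (ext_d \<omega>))))
                      (iprod Z (fadd (fscale f (ext_d \<omega>)) (wedge 1 \<omega> (ext_d (zero_form_of f))))))
       \<and> ((\<exists>h. holo_germ h \<and> germ_eq 1 (lie1 X \<omega>) (fscale h \<omega>)) \<longrightarrow>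
            germ_eq 1 (lie1 X \<omega>)
              (fscale (\<lambda>p. dirderiv f p ez - (\<Sum>m\<in>UNIV. s m p * b m p)
                          - fst p * (\<Sum>m\<in>UNIV. s m p * dirderiv (b m) p ez)) \<omega>))"
proof -
  define hz where "hz p = dirderiv f p ez - (\<Sum>m\<in>UNIV. s m p * b m p)
                          - fst p * (\<Sum>m\<in>UNIV. s m p * dirderiv (b m) p ez)" for p
  have near: "\<forall>\<^sub>F p in nhds 0. \<omega> p [X p] = f p \<and> \<omega> p [ez] = 1 \<and> lie1 X \<omega> p [ez] = hz p
      \<and> (\<forall>u. lie1 X \<omega> p [u] = dirderiv f p u + ext_d \<omega> p [X p, u])"
    unfolding hz_def using assms(6-9)
    by (intro eventually_lie1_first_type_form[OF \<omega>_def[THEN meta_eq_to_obj_eq] X_def[THEN meta_eq_to_obj_eq]]) auto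
  have "holo_germ hz"
    unfolding hz_def using assms(7-9)
    by (intro holo_germ_diff holo_germ_sum holo_germ_mult holo_germ_fst holo_germ_dirderiv) auto
  then have "(\<exists>h. holo_germ h \<and> germ_eq 1 (lie1 X \<omega>) (fscale h \<omega>)) \<longleftrightarrow>
      germ_eq 1 (lie1 X \<omega>) (fscale hz \<omega>)"
    by (rule holo_multiple_iff) (use near in \<open>auto elim: eventually_mono\<close>)
  moreover have "germ_eq 1 (lie1 X \<omega>) (fscale hz \<omega>) \<longleftrightarrow>
      germ_eq 1 (iprod Z (iprod X (wedge 1 \<omega> (ext_d \<omega>))))
                (iprod Z (fadd (fscale f (ext_d \<omega>)) (wedge 1 \<omega> (ext_d (zero_form_of f)))))"
    unfolding Z_def using near by (rule interior_identity_germ_iff)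
  ultimately show ?thesis
    unfolding hz_def by blast
qed

end
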